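(* Let $n\ge1$, $v>0$, $0\le\rho<\frac12v$, and let $B=(b_{jk})_{j,k=0}^n\in\mathbb{R}^{(n+1)\times(n+1)}$ with $b_{jk}=v-k$ if $j>k$, $b_{kk}=\frac v2-k-\rho$, $b_{jk}=-j$ if $j<k$. Set $\gamma=\sqrt{\frac14v^2-\rho^2}$. Then $$\det B=\Big(\frac v2-\rho\Big)(-i\gamma)^{n-1}\Big\{-i\gamma\,U_n\Big(-\frac{i(2\rho+1)}{2\gamma}\Big)+\Big(\frac v2+\rho\Big)U_{n-1}\Big(-\frac{i(2\rho+1)}{2\gamma}\Big)\Big\}.$$
   Context: $U_m$ denotes the $m$th Chebyshev polynomial of the second kind (evaluated at complex arguments as a polynomial); $i=\sqrt{-1}$. *)

theory Defs
  imports Complex_Main "Jordan_Normal_Form.Determinant"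
begin

fun chebU :: "nat \<Rightarrow> complex \<Rightarrow> complex" where
  "chebU 0 x = 1"
| "chebU (Suc 0) x = 2 * x"
| "chebU (Suc (Suc m)) x = 2 * x * chebU (Suc m) x - chebU m x"

end

theory Submission imports Defs begin

text \<open>Subtracting the row with index n from the last one and then the column with index n from
  the last one leaves a bordered matrix whose last row and column vanish except in their final
  two entries. Expanding along them gives the three-term recurrence
  D(m+2) = -(2\<rho>+1) D(m+1) + (v/2+\<rho>)(v/2-\<rho>) D(m) for the leading principal minors D(m) of B.
  The scaled Chebyshev polynomials (-\<i>\<gamma>)^m U_m(x) satisfy the same recurrence, since
  2(-\<i>\<gamma>)x = -(2\<rho>+1) and -(-\<i>\<gamma>)^2 = \<gamma>^2 = (v/2+\<rho>)(v/2-\<rho>); comparing two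
  initial values identifies the minors with the stated combination.\<close>

definition lin_rec2 :: "'a::comm_ring_1 \<Rightarrow> 'a \<Rightarrow> (nat \<Rightarrow> 'a) \<Rightarrow> bool" where
  "lin_rec2 a b f \<longleftrightarrow> (\<forall>m. f (Suc (Suc m)) = a * f (Suc m) + b * f m)"

lemma lin_rec2_eqI:
  assumes "lin_rec2 a b f" "lin_rec2 a b g" "f 0 = g 0" "f 1 = g 1"
  shows "f m = g m"
  using assms unfolding lin_rec2_def by (induction m rule: induct_nat_012) simp_all

lemma lin_rec2_shift:
  "lin_rec2 a b f \<Longrightarrow> lin_rec2 a b (\<lambda>m. f (Suc m))"
  unfolding lin_rec2_def by simp

lemma lin_rec2_lincomb:
  "lin_rec2 a b f \<Longrightarrow> lin_rec2 a b g \<Longrightarrow> lin_rec2 a b (\<lambda>m. c * f m + d * g m)"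
  unfolding lin_rec2_def by (simp add: algebra_simps)

lemma lin_rec2_of_real:
  "lin_rec2 a b f \<Longrightarrow>
    lin_rec2 (of_real a) (of_real b) (\<lambda>m. of_real (f m) :: 'a::{real_algebra_1, comm_ring_1})"
  unfolding lin_rec2_def by simp

lemma lin_rec2_chebU_scaled:
  "lin_rec2 (2 * c * x) (- c\<^sup>2) (\<lambda>m. c ^ m * chebU m x)"
  unfolding lin_rec2_def by (simp add: algebra_simps power2_eq_square)

lemma mat_delete_mat_last:
  "mat_delete (mat (Suc n) (Suc n) f) n n = mat n n f"
  by (rule eq_matI) (auto simp: mat_delete_def)

lemma det_bordered:
  fixes M :: "'a::comm_ring_1 mat"
  assumes M: "M \<in> carrier_mat (n + 2) (n + 2)"
    and row: "\<And>j. j < n \<Longrightarrow> M $$ (n + 1, j) = 0"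
    and col: "\<And>i. i < n \<Longrightarrow> M $$ (i, n + 1) = 0"
  shows "det M = M $$ (n + 1, n + 1) * det (mat_delete M (n + 1) (n + 1))
                 - M $$ (n + 1, n) * M $$ (n, n + 1)
                   * det (mat_delete (mat_delete M (n + 1) (n + 1)) n n)"
proof -
  define N where "N = mat_delete M (n + 1) n"
  have N: "N \<in> carrier_mat (n + 1) (n + 1)"
    using mat_delete_carrier[OF M] by (simp add: N_def)
  have "det N = (\<Sum>i<n + 1. N $$ (i, n) * cofactor N i n)"
    by (rule laplace_expansion_column[OF N]) simp
  also have "\<dots> = M $$ (n, n + 1) * cofactor N n n"
    using M col by (simp add: N_def mat_delete_def)
  moreover have "mat_delete N n n = mat_delete (mat_delete M (n + 1) (n + 1)) n n"
    using M by (intro eq_matI) (auto simp: N_def mat_delete_def)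
  ultimately have det_N:
    "det N = M $$ (n, n + 1) * det (mat_delete (mat_delete M (n + 1) (n + 1)) n n)"
    by (simp add: cofactor_def)
  have "det M = (\<Sum>j<n + 2. M $$ (n + 1, j) * cofactor M (n + 1) j)"
    by (rule laplace_expansion_row[OF M]) simp
  also have "\<dots> = M $$ (n + 1, n) * cofactor M (n + 1) n
                  + M $$ (n + 1, n + 1) * cofactor M (n + 1) (n + 1)"
    using row by (simp add: numeral_2_eq_2)
  finally show ?thesis
    using det_N by (simp add: cofactor_def N_def)
qed

definition B_entry :: "real \<Rightarrow> real \<Rightarrow> nat \<times> nat \<Rightarrow> real" where
  "B_entry v \<rho> = (\<lambda>(j, k). if j > k then v - real k
                          else if j = k then v / 2 - real k - \<rho>
                          else - real j)"

lemma det_B_entry_rec: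
  "lin_rec2 (- (2 * \<rho> + 1)) ((v / 2 + \<rho>) * (v / 2 - \<rho>))
     (\<lambda>m. det (mat m m (B_entry v \<rho>)))"
  unfolding lin_rec2_def
proof
  fix n
  define A where "A = mat (n + 2) (n + 2) (B_entry v \<rho>)"
  define M where "M = addcol (-1) (n + 1) n (addrow (-1) (n + 1) n A)"
  have A: "A \<in> carrier_mat (n + 2) (n + 2)"
    by (simp add: A_def)
  have M: "M \<in> carrier_mat (n + 2) (n + 2)"
    using A by (simp add: M_def mat_addrow_def mat_addcol_def)
  have "det M = det A"
    using A det_addrow[OF _ _ A, of n "n + 1"]
      det_addcol[of n "n + 2" "n + 1" "addrow (-1) (n + 1) n A"]
    by (simp add: M_def mat_addrow_def)
  moreover have "det M = - (2 * \<rho> + 1) * det (mat (n + 1) (n + 1) (B_entry v \<rho>))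
      + (v / 2 + \<rho>) * (v / 2 - \<rho>) * det (mat n n (B_entry v \<rho>))"
  proof -
    have corner: "M $$ (n + 1, n + 1) = - (2 * \<rho> + 1)" "M $$ (n + 1, n) = v / 2 + \<rho>"
      "M $$ (n, n + 1) = - (v / 2 - \<rho>)"
      by (simp_all add: M_def A_def B_entry_def)
    have minor: "mat_delete M (n + 1) (n + 1) = mat (n + 1) (n + 1) (B_entry v \<rho>)"
      by (rule eq_matI) (auto simp: M_def A_def mat_delete_def)
    have "det M = M $$ (n + 1, n + 1) * det (mat_delete M (n + 1) (n + 1))
                 - M $$ (n + 1, n) * M $$ (n, n + 1)
                   * det (mat_delete (mat_delete M (n + 1) (n + 1)) n n)"
      by (rule det_bordered[OF M]) (simp_all add: M_def A_def B_entry_def)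
    then show ?thesis
      unfolding corner minor mat_delete_mat_last[of n, unfolded Suc_eq_plus1]
      by (simp add: algebra_simps)
  qed
  ultimately show "det (mat (Suc (Suc n)) (Suc (Suc n)) (B_entry v \<rho>)) =
      - (2 * \<rho> + 1) * det (mat (Suc n) (Suc n) (B_entry v \<rho>))
      + (v / 2 + \<rho>) * (v / 2 - \<rho>) * det (mat n n (B_entry v \<rho>))"
    by (simp add: A_def)
qed

lemma det_B_entry_0_1:
  "det (mat 0 0 (B_entry v \<rho>)) = 1" "det (mat 1 1 (B_entry v \<rho>)) = v / 2 - \<rho>"
  by (simp, subst det_single) (auto simp: B_entry_def)

lemma det_B_entry_chebU:
  fixes c x :: complex
  assumes cx: "2 * c * x = complex_of_real (- (2 * \<rho> + 1))"
    and c_sq: "- c\<^sup>2 = complex_of_real ((v / 2 + \<rho>) * (v / 2 - \<rho>))"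
  shows "complex_of_real (det (mat (m + 2) (m + 2) (B_entry v \<rho>))) =
           complex_of_real (v / 2 - \<rho>) * c ^ m
           * (c * chebU (Suc m) x + complex_of_real (v / 2 + \<rho>) * chebU m x)"
proof -
  define a where "a = complex_of_real (- (2 * \<rho> + 1))"
  define d where "d = complex_of_real (v / 2 - \<rho>)"
  define e where "e = complex_of_real (v / 2 + \<rho>)"
  define D where "D = (\<lambda>m. complex_of_real (det (mat m m (B_entry v \<rho>))))"
  define Q where "Q = (\<lambda>m. c ^ m * chebU m x)"
  have rec_D: "lin_rec2 a (e * d) D"
    using lin_rec2_of_real[OF det_B_entry_rec, where 'a = complex]
    by (simp add: D_def a_def d_def e_def)
  have rec_Q: "lin_rec2 a (e * d) Q"
    using lin_rec2_chebU_scaled[of c x] by (simp add: Q_def a_def d_def e_def cx c_sq)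
  have "D (Suc (Suc m)) = d * Q (Suc m) + e * d * Q m"
  proof (rule lin_rec2_eqI)
    show "lin_rec2 a (e * d) (\<lambda>m. D (Suc (Suc m)))"
      using rec_D by (intro lin_rec2_shift)
    show "lin_rec2 a (e * d) (\<lambda>m. d * Q (Suc m) + e * d * Q m)"
      using rec_Q by (intro lin_rec2_lincomb lin_rec2_shift)
    have "D 0 = 1" "D 1 = d"
      unfolding D_def d_def det_B_entry_0_1 by simp_all
    moreover have "Q 0 = 1" "Q 1 = a"
      using cx by (simp_all add: Q_def a_def mult_ac)
    ultimately show "D (Suc (Suc 0)) = d * Q (Suc 0) + e * d * Q 0"
      "D (Suc (Suc 1)) = d * Q (Suc 1) + e * d * Q 1"
      using rec_D rec_Q unfolding lin_rec2_def by (simp_all add: algebra_simps)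
  qed
  then show ?thesis
    unfolding d_def[symmetric] e_def[symmetric] D_def Q_def by (simp add: algebra_simps)
qed

theorem lemma5p4:
  fixes n :: nat and v \<rho> :: real
  assumes "n \<ge> 1" and "v > 0" and "0 \<le> \<rho>" and "\<rho> < v / 2"
  defines "B \<equiv> mat (n + 1) (n + 1)
              (\<lambda>(j, k). if j > k then v - real k
                        else if j = k then v / 2 - real k - \<rho>
                        else - real j)"
  defines "\<gamma> \<equiv> sqrt (v\<^sup>2 / 4 - \<rho>\<^sup>2)"
  defines "x \<equiv> - \<i> * complex_of_real (2 * \<rho> + 1) / complex_of_real (2 * \<gamma>)"
  shows "complex_of_real (det B) =
           complex_of_real (v / 2 - \<rho>) * (- \<i> * complex_of_real \<gamma>) ^ (n - 1) *
           (- \<i> * complex_of_real \<gamma> * chebU n x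
            + complex_of_real (v / 2 + \<rho>) * chebU (n - 1) x)"
proof -
  have "\<rho>\<^sup>2 < (v / 2)\<^sup>2"
    using assms(3,4) by (intro power_strict_mono) auto
  then have \<gamma>_sq: "\<gamma>\<^sup>2 = (v / 2 + \<rho>) * (v / 2 - \<rho>)" and "\<gamma> \<noteq> 0"
    by (simp_all add: \<gamma>_def power_divide algebra_simps power2_eq_square)
  define c where "c = - \<i> * complex_of_real \<gamma>"
  have "2 * c * x = complex_of_real (- (2 * \<rho> + 1))"
    "- c\<^sup>2 = complex_of_real ((v / 2 + \<rho>) * (v / 2 - \<rho>))"
    using \<open>\<gamma> \<noteq> 0\<close> by (simp_all add: c_def x_def power_mult_distrib flip: \<gamma>_sq)
  note det_B_entry_chebU[OF this]
  moreover obtain m where "n = Suc m"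
    using assms(1) by (cases n) auto
  moreover have "B = mat (n + 1) (n + 1) (B_entry v \<rho>)"
    by (simp add: B_def B_entry_def)
  ultimately show ?thesis
    unfolding c_def[symmetric] by simp
qed

end
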